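(* Let $(\Omega,\Sigma,\mu)$ be a measure space with $\mu$ a positive countably additive measure, let $\rho:\Omega\to[0,\infty)$ be measurable, and let $f,g_1,\dots,g_n,h$ be real-valued measurable functions on $\Omega$ with $\int_\Omega\rho|u|^2\,d\mu<\infty$ for each $u\in\{f,g_1,\dots,g_n,h\}$. Writing $\int_\Omega\rho uv\,d\mu$ for $\int_\Omega\rho(s)u(s)v(s)\,d\mu(s)$, we have \[ \sum_{i=1}^n\begin{vmatrix}\int_\Omega\rho fg_i\,d\mu & \int_\Omega\rho fh\,d\mu\\ \int_\Omega\rho g_ih\,d\mu & \int_\Omega\rho h^2\,d\mu\end{vmatrix}^2 \le \begin{vmatrix}\int_\Omega\rho f^2\,d\mu & \int_\Omega\rho fh\,d\mu\\ \int_\Omega\rho fh\,d\mu & \int_\Omega\rho h^2\,d\mu\end{vmatrix} \times\left\{\max_{1\le i\le n}\begin{vmatrix}\int_\Omega\rho g_i^2\,d\mu & \int_\Omega\rho g_ih\,d\mu\\ \int_\Omega\rho g_ih\,d\mu & \int_\Omega\rho h^2\,d\mu\end{vmatrix} +(n-1)\max_{1\le i\ne j\le n}\left|\begin{vmatrix}\int_\Omega\rho g_jg_i\,d\mu & \int_\Omega\rho g_jh\,d\mu\\ \int_\Omega\rho g_ih\,d\mu & \int_\Omega\rho h^2\,d\mu\end{vmatrix}\right|\right\}. \]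
   Context: $\begin{vmatrix}a&b\\c&d\end{vmatrix}=ad-bc$ denotes a $2\times2$ determinant. The maximum over $1\le i\ne j\le n$ is over all pairs $(i,j)$ with $i\ne j$. *)

theory Defs
  imports "HOL-Analysis.Analysis"
begin

definition det2 :: "real \<Rightarrow> real \<Rightarrow> real \<Rightarrow> real \<Rightarrow> real" where
  "det2 a b c d = a * d - b * c"

definition wip :: "'a measure \<Rightarrow> ('a \<Rightarrow> real) \<Rightarrow> ('a \<Rightarrow> real) \<Rightarrow> ('a \<Rightarrow> real) \<Rightarrow> real" where
  "wip M \<rho> u v = (LINT s|M. \<rho> s * u s * v s)"

end

theory Submission
  imports Defs
begin

text \<open>
  For fixed \<open>h\<close>, the form \<open>B(u, v) = \<langle>u, v\<rangle>\<langle>h, h\<rangle> - \<langle>u, h\<rangle>\<langle>v, h\<rangle>\<close> is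
  \<open>\<langle>h, h\<rangle>\<close> times the inner product of the components of \<open>u\<close> and \<open>v\<close> orthogonal to \<open>h\<close>,
  hence positive semidefinite, and every determinant in the statement is a value of \<open>B\<close>.
  The inequality is then Bombieri's inequality for \<open>B\<close>: with \<open>c\<^sub>i = B(f, g\<^sub>i)\<close> and
  \<open>v = \<Sum> c\<^sub>i g\<^sub>i\<close>, Cauchy-Schwarz gives \<open>(\<Sum> c\<^sub>i\<^sup>2)\<^sup>2 = B(f, v)\<^sup>2 \<le> B(f, f) B(v, v)\<close>, and
  \<open>2 |c\<^sub>i c\<^sub>j| \<le> c\<^sub>i\<^sup>2 + c\<^sub>j\<^sup>2\<close> bounds \<open>B(v, v) = \<Sum>\<^sub>i\<^sub>j c\<^sub>i c\<^sub>j B(g\<^sub>i, g\<^sub>j)\<close> by \<open>\<Sum> c\<^sub>i\<^sup>2\<close> times the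
  largest absolute row sum of the matrix \<open>B(g\<^sub>i, g\<^sub>j)\<close>.
\<close>

lemma discriminant_le_of_quadratic_nonneg:
  fixes a b c :: real
  assumes nonneg: "\<And>t. 0 \<le> a + 2 * b * t + c * t\<^sup>2" and "0 \<le> c"
  shows "b\<^sup>2 \<le> a * c"
proof (cases "c = 0")
  case True
  show ?thesis
  proof (rule ccontr)
    assume "\<not> ?thesis"
    with True have "b \<noteq> 0" by simp
    have "0 \<le> a + 2 * b * (- (a + 1) / (2 * b))" using nonneg[of "- (a + 1) / (2 * b)"] True by simp
    also have "\<dots> = -1" using \<open>b \<noteq> 0\<close> by (simp add: field_simps)
    finally show False by simp
  qed
next
  case False
  with \<open>0 \<le> c\<close> have "0 < c" by simp
  have "0 \<le> a + 2 * b * (- b / c) + c * (- b / c)\<^sup>2" by (rule nonneg)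
  also have "\<dots> = (a * c - b\<^sup>2) / c" using \<open>0 < c\<close> by (simp add: field_simps power2_eq_square)
  finally show ?thesis using \<open>0 < c\<close> by (simp add: zero_le_divide_iff)
qed

lemma quadratic_form_le_row_sum_bound:
  fixes G :: "'i \<Rightarrow> 'i \<Rightarrow> real" and c :: "'i \<Rightarrow> real"
  assumes sym: "\<And>i j. i \<in> I \<Longrightarrow> j \<in> I \<Longrightarrow> G i j = G j i"
    and row: "\<And>i. i \<in> I \<Longrightarrow> (\<Sum>j\<in>I. \<bar>G i j\<bar>) \<le> K"
  shows "(\<Sum>i\<in>I. \<Sum>j\<in>I. c i * c j * G i j) \<le> (\<Sum>i\<in>I. (c i)\<^sup>2) * K"
proof -
  have amgm: "x * y * z \<le> (x\<^sup>2 / 2 + y\<^sup>2 / 2) * \<bar>z\<bar>" for x y z :: real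
  proof -
    have "x * y * z \<le> \<bar>x * y\<bar> * \<bar>z\<bar>" by (metis abs_ge_self abs_mult)
    also have "\<dots> \<le> (x\<^sup>2 / 2 + y\<^sup>2 / 2) * \<bar>z\<bar>"
      using sum_squares_bound[of "\<bar>x\<bar>" "\<bar>y\<bar>"] by (intro mult_right_mono) (auto simp: abs_mult)
    finally show ?thesis .
  qed
  have "(\<Sum>i\<in>I. \<Sum>j\<in>I. c i * c j * G i j)
      \<le> (\<Sum>i\<in>I. \<Sum>j\<in>I. ((c i)\<^sup>2 / 2 + (c j)\<^sup>2 / 2) * \<bar>G i j\<bar>)"
    by (intro sum_mono amgm)
  also have "\<dots> = (\<Sum>i\<in>I. \<Sum>j\<in>I. (c i)\<^sup>2 / 2 * \<bar>G i j\<bar>) + (\<Sum>i\<in>I. \<Sum>j\<in>I. (c j)\<^sup>2 / 2 * \<bar>G i j\<bar>)"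
    by (simp add: distrib_right sum.distrib)
  also have "(\<Sum>i\<in>I. \<Sum>j\<in>I. (c j)\<^sup>2 / 2 * \<bar>G i j\<bar>) = (\<Sum>i\<in>I. \<Sum>j\<in>I. (c i)\<^sup>2 / 2 * \<bar>G i j\<bar>)"
    by (subst sum.swap) (simp add: sym cong: sum.cong)
  also have "(\<Sum>i\<in>I. \<Sum>j\<in>I. (c i)\<^sup>2 / 2 * \<bar>G i j\<bar>) + \<dots> = (\<Sum>i\<in>I. (c i)\<^sup>2 * (\<Sum>j\<in>I. \<bar>G i j\<bar>))"
    by (simp add: sum_distrib_left sum.distrib[symmetric] mult.commute)
  also have "\<dots> \<le> (\<Sum>i\<in>I. (c i)\<^sup>2 * K)"
    by (intro sum_mono mult_left_mono row) auto
  finally show ?thesis by (simp add: sum_distrib_right)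
qed

text \<open>
  The form lives on a set \<open>V\<close> of functions rather than on a vector space type, because the
  weighted \<open>L\<^sup>2\<close> inner product is bilinear only on the square-integrable functions.
\<close>

locale pos_semidef_form =
  fixes V :: "('a \<Rightarrow> real) set" and B :: "('a \<Rightarrow> real) \<Rightarrow> ('a \<Rightarrow> real) \<Rightarrow> real"
  assumes zero_mem: "(\<lambda>_. 0) \<in> V"
    and lincomb_mem: "u \<in> V \<Longrightarrow> v \<in> V \<Longrightarrow> (\<lambda>s. u s + t * v s) \<in> V"
    and sym: "u \<in> V \<Longrightarrow> v \<in> V \<Longrightarrow> B u v = B v u"
    and lincomb_left: "u \<in> V \<Longrightarrow> v \<in> V \<Longrightarrow> w \<in> V \<Longrightarrow> B (\<lambda>s. u s + t * v s) w = B u w + t * B v w"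
    and nonneg: "u \<in> V \<Longrightarrow> 0 \<le> B u u"
begin

lemma zero_left: "w \<in> V \<Longrightarrow> B (\<lambda>_. 0) w = 0"
  using lincomb_left[OF zero_mem zero_mem, of w 1] by simp

lemma sum_mem:
  assumes "\<And>i. i \<in> I \<Longrightarrow> g i \<in> V"
  shows "(\<lambda>s. \<Sum>i\<in>I. c i * g i s) \<in> V"
  using assms
proof (induction I rule: infinite_finite_induct)
  case (insert i I)
  then have "(\<lambda>s. (\<Sum>j\<in>I. c j * g j s) + c i * g i s) \<in> V"
    by (intro lincomb_mem) auto
  with insert show ?case by (simp add: add.commute)
qed (simp_all add: zero_mem)

lemma sum_left:
  assumes "\<And>i. i \<in> I \<Longrightarrow> g i \<in> V" and "w \<in> V"
  shows "B (\<lambda>s. \<Sum>i\<in>I. c i * g i s) w = (\<Sum>i\<in>I. c i * B (g i) w)"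
  using assms(1)
proof (induction I rule: infinite_finite_induct)
  case (insert i I)
  then have "B (\<lambda>s. (\<Sum>j\<in>I. c j * g j s) + c i * g i s) w = B (\<lambda>s. \<Sum>j\<in>I. c j * g j s) w + c i * B (g i) w"
    by (intro lincomb_left sum_mem \<open>w \<in> V\<close>) auto
  with insert show ?case by (simp add: add.commute)
qed (simp_all add: zero_left \<open>w \<in> V\<close>)

lemma sum_right:
  assumes "\<And>i. i \<in> I \<Longrightarrow> g i \<in> V" and "w \<in> V"
  shows "B w (\<lambda>s. \<Sum>i\<in>I. c i * g i s) = (\<Sum>i\<in>I. c i * B w (g i))"
proof -
  have "B w (\<lambda>s. \<Sum>i\<in>I. c i * g i s) = B (\<lambda>s. \<Sum>i\<in>I. c i * g i s) w"
    using assms by (simp add: sym sum_mem)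
  also have "\<dots> = (\<Sum>i\<in>I. c i * B w (g i))"
    using assms by (simp add: sum_left sym)
  finally show ?thesis .
qed

lemma Cauchy_Schwarz:
  assumes u: "u \<in> V" and v: "v \<in> V"
  shows "(B u v)\<^sup>2 \<le> B u u * B v v"
proof (rule discriminant_le_of_quadratic_nonneg)
  fix t
  let ?x = "\<lambda>s. u s + t * v s"
  have x: "?x \<in> V" using u v by (rule lincomb_mem)
  have "0 \<le> B ?x ?x" using x by (rule nonneg)
  also have "\<dots> = B u ?x + t * B v ?x" using u v x by (rule lincomb_left)
  also have "\<dots> = B u u + 2 * B u v * t + B v v * t\<^sup>2"
    using u v x by (simp add: sym[of _ ?x] lincomb_left sym[of v u] power2_eq_square algebra_simps)
  finally show "0 \<le> B u u + 2 * B u v * t + B v v * t\<^sup>2" .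
  show "0 \<le> B v v" using v by (rule nonneg)
qed

theorem Bombieri_inequality:
  assumes "I \<noteq> {}" and f: "f \<in> V" and g: "\<And>i. i \<in> I \<Longrightarrow> g i \<in> V"
    and row: "\<And>i. i \<in> I \<Longrightarrow> (\<Sum>j\<in>I. \<bar>B (g i) (g j)\<bar>) \<le> K"
  shows "(\<Sum>i\<in>I. (B f (g i))\<^sup>2) \<le> B f f * K"
proof -
  define c where "c i = B f (g i)" for i
  define v where "v s = (\<Sum>i\<in>I. c i * g i s)" for s
  define S where "S = (\<Sum>i\<in>I. (c i)\<^sup>2)"
  have v: "v \<in> V" unfolding v_def using g by (rule sum_mem)
  have "B f v = S"
    unfolding v_def S_def using g f by (simp add: sum_right c_def power2_eq_square)
  have "B v v = (\<Sum>i\<in>I. \<Sum>j\<in>I. c i * c j * B (g i) (g j))"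
    unfolding v_def using g by (simp add: sum_left sum_right sum_mem sum_distrib_left mult.assoc)
  also have "\<dots> \<le> S * K"
    unfolding S_def by (rule quadratic_form_le_row_sum_bound) (use g sym row in auto)
  finally have "B v v \<le> S * K" .
  obtain i where "i \<in> I" using \<open>I \<noteq> {}\<close> by blast
  have "0 \<le> K" using row[OF \<open>i \<in> I\<close>] sum_nonneg[of I "\<lambda>j. \<bar>B (g i) (g j)\<bar>"] by linarith
  have "S * S \<le> B f f * B v v" using Cauchy_Schwarz[OF f v] \<open>B f v = S\<close> by (simp add: power2_eq_square)
  also have "\<dots> \<le> B f f * (S * K)" using \<open>B v v \<le> S * K\<close> nonneg[OF f] by (rule mult_left_mono)
  finally have "S * S \<le> (B f f * K) * S" by (simp add: mult_ac)
  moreover have "0 \<le> S" unfolding S_def by (simp add: sum_nonneg)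
  ultimately have "S \<le> B f f * K" using nonneg[OF f] \<open>0 \<le> K\<close>
    by (cases "S = 0") (auto simp: mult_le_cancel_right)
  then show ?thesis unfolding S_def c_def .
qed

end

definition gram_form ::
    "(('a \<Rightarrow> real) \<Rightarrow> ('a \<Rightarrow> real) \<Rightarrow> real) \<Rightarrow> ('a \<Rightarrow> real) \<Rightarrow> ('a \<Rightarrow> real) \<Rightarrow> ('a \<Rightarrow> real) \<Rightarrow> real"
  where "gram_form B h u v = det2 (B u v) (B u h) (B v h) (B h h)"

lemma (in pos_semidef_form) pos_semidef_form_gram:
  assumes h: "h \<in> V"
  shows "pos_semidef_form V (gram_form B h)"
proof
  fix u v w t assume u: "u \<in> V" and v: "v \<in> V"
  show "gram_form B h u v = gram_form B h v u"
    using u v h by (simp add: gram_form_def det2_def sym)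
  show "w \<in> V \<Longrightarrow> gram_form B h (\<lambda>s. u s + t * v s) w = gram_form B h u w + t * gram_form B h v w"
    using u v h by (simp add: gram_form_def det2_def lincomb_left algebra_simps)
next
  fix u assume "u \<in> V"
  then show "0 \<le> gram_form B h u u"
    using Cauchy_Schwarz[OF _ h] by (simp add: gram_form_def det2_def power2_eq_square)
qed (use zero_mem lincomb_mem in auto)

definition weighted_L2 :: "'a measure \<Rightarrow> ('a \<Rightarrow> real) \<Rightarrow> ('a \<Rightarrow> real) set" where
  "weighted_L2 M \<rho> = {u \<in> borel_measurable M. integrable M (\<lambda>s. \<rho> s * (u s)\<^sup>2)}"

lemma integrable_weighted_product:
  assumes "\<rho> \<in> borel_measurable M" and \<rho>_nonneg: "\<And>s. s \<in> space M \<Longrightarrow> 0 \<le> \<rho> s"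
    and u: "u \<in> weighted_L2 M \<rho>" and v: "v \<in> weighted_L2 M \<rho>"
  shows "integrable M (\<lambda>s. \<rho> s * u s * v s)"
proof (rule Bochner_Integration.integrable_bound)
  show "integrable M (\<lambda>s. \<rho> s * (u s)\<^sup>2 + \<rho> s * (v s)\<^sup>2)"
    using u v unfolding weighted_L2_def by auto
  show "(\<lambda>s. \<rho> s * u s * v s) \<in> borel_measurable M"
    using assms unfolding weighted_L2_def by auto
  show "AE s in M. norm (\<rho> s * u s * v s) \<le> norm (\<rho> s * (u s)\<^sup>2 + \<rho> s * (v s)\<^sup>2)"
  proof (rule AE_I2)
    fix s assume "s \<in> space M"
    have "2 * \<bar>u s * v s\<bar> \<le> (u s)\<^sup>2 + (v s)\<^sup>2"
      using sum_squares_bound[of "\<bar>u s\<bar>" "\<bar>v s\<bar>"] by (simp add: abs_mult)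
    then have "\<bar>u s * v s\<bar> \<le> (u s)\<^sup>2 + (v s)\<^sup>2"
      using abs_ge_zero[of "u s * v s"] by linarith
    with \<rho>_nonneg[OF \<open>s \<in> space M\<close>] show "norm (\<rho> s * u s * v s) \<le> norm (\<rho> s * (u s)\<^sup>2 + \<rho> s * (v s)\<^sup>2)"
      by (simp add: abs_mult mult.assoc distrib_left[symmetric] mult_left_mono)
  qed
qed

lemma pos_semidef_form_wip:
  assumes \<rho>_meas: "\<rho> \<in> borel_measurable M" and \<rho>_nonneg: "\<And>s. s \<in> space M \<Longrightarrow> 0 \<le> \<rho> s"
  shows "pos_semidef_form (weighted_L2 M \<rho>) (wip M \<rho>)"
proof
  fix u v w t assume u: "u \<in> weighted_L2 M \<rho>" and v: "v \<in> weighted_L2 M \<rho>"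
  have prod: "integrable M (\<lambda>s. \<rho> s * x s * y s)"
    if "x \<in> weighted_L2 M \<rho>" "y \<in> weighted_L2 M \<rho>" for x y
    using \<rho>_meas \<rho>_nonneg that by (rule integrable_weighted_product)
  have "(\<lambda>s. \<rho> s * (u s + t * v s)\<^sup>2) = (\<lambda>s. \<rho> s * (u s)\<^sup>2 + (2 * t) * (\<rho> s * u s * v s) + t\<^sup>2 * (\<rho> s * (v s)\<^sup>2))"
    by (simp add: power2_eq_square algebra_simps)
  with u v prod[OF u v] show "(\<lambda>s. u s + t * v s) \<in> weighted_L2 M \<rho>"
    unfolding weighted_L2_def by auto
  show "wip M \<rho> u v = wip M \<rho> v u"
    unfolding wip_def by (simp add: mult_ac)
  assume w: "w \<in> weighted_L2 M \<rho>"
  have "(\<lambda>s. \<rho> s * (u s + t * v s) * w s) = (\<lambda>s. \<rho> s * u s * w s + t * (\<rho> s * v s * w s))"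
    by (simp add: algebra_simps)
  with prod[OF u w] prod[OF v w] show "wip M \<rho> (\<lambda>s. u s + t * v s) w = wip M \<rho> u w + t * wip M \<rho> v w"
    unfolding wip_def by simp
next
  fix u
  show "0 \<le> wip M \<rho> u u"
    unfolding wip_def using \<rho>_nonneg by (intro integral_nonneg_AE AE_I2) (simp add: mult.assoc)
qed (simp add: weighted_L2_def)

lemma row_sum_abs_le_Max_diag_plus_Max_off_diag:
  fixes G :: "nat \<Rightarrow> nat \<Rightarrow> real"
  assumes k: "k \<in> {1..n}" and "0 \<le> G k k"
  shows "(\<Sum>j\<in>{1..n}. \<bar>G k j\<bar>) \<le> Max {G i i | i. i \<in> {1..n}}
    + (real n - 1) * (if n \<ge> 2 then Max {\<bar>G j i\<bar> | i j. i \<in> {1..n} \<and> j \<in> {1..n} \<and> i \<noteq> j} else 0)"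
    (is "_ \<le> ?diag + _ * ?off")
proof -
  have "G k k \<le> ?diag"
    by (rule Max_ge) (use k in auto)
  moreover have "\<bar>G k j\<bar> \<le> ?off" if j: "j \<in> {1..n} - {k}" for j
  proof -
    have "{\<bar>G j i\<bar> | i j. i \<in> {1..n} \<and> j \<in> {1..n} \<and> i \<noteq> j} \<subseteq> (\<lambda>(i, j). \<bar>G j i\<bar>) ` ({1..n} \<times> {1..n})"
      by auto
    then have "finite {\<bar>G j i\<bar> | i j. i \<in> {1..n} \<and> j \<in> {1..n} \<and> i \<noteq> j}"
      by (rule finite_subset) simp
    moreover have "\<bar>G k j\<bar> \<in> {\<bar>G j i\<bar> | i j. i \<in> {1..n} \<and> j \<in> {1..n} \<and> i \<noteq> j}"
      using k j by blast
    ultimately have "\<bar>G k j\<bar> \<le> Max {\<bar>G j i\<bar> | i j. i \<in> {1..n} \<and> j \<in> {1..n} \<and> i \<noteq> j}"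
      by (rule Max_ge)
    moreover have "n \<ge> 2" using k j by auto
    ultimately show ?thesis by simp
  qed
  then have "(\<Sum>j\<in>{1..n} - {k}. \<bar>G k j\<bar>) \<le> (real n - 1) * ?off"
    using sum_bounded_above[of "{1..n} - {k}" "\<lambda>j. \<bar>G k j\<bar>" ?off] k by simp
  moreover have "(\<Sum>j\<in>{1..n}. \<bar>G k j\<bar>) = \<bar>G k k\<bar> + (\<Sum>j\<in>{1..n} - {k}. \<bar>G k j\<bar>)"
    using k by (simp add: sum.remove)
  ultimately show ?thesis using \<open>0 \<le> G k k\<close> by simp
qed

theorem proposition5p2:
  fixes M :: "'a measure" and \<rho> f h :: "'a \<Rightarrow> real" and g :: "nat \<Rightarrow> 'a \<Rightarrow> real"
    and n :: nat
  assumes n: "n \<ge> 1"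
    and rho_meas: "\<rho> \<in> borel_measurable M" and rho_nonneg: "\<And>s. s \<in> space M \<Longrightarrow> \<rho> s \<ge> 0"
    and f_meas: "f \<in> borel_measurable M" and h_meas: "h \<in> borel_measurable M"
    and g_meas: "\<And>i. i \<in> {1..n} \<Longrightarrow> g i \<in> borel_measurable M"
    and f_L2: "integrable M (\<lambda>s. \<rho> s * \<bar>f s\<bar>^2)"
    and h_L2: "integrable M (\<lambda>s. \<rho> s * \<bar>h s\<bar>^2)"
    and g_L2: "\<And>i. i \<in> {1..n} \<Longrightarrow> integrable M (\<lambda>s. \<rho> s * \<bar>g i s\<bar>^2)"
  shows "(\<Sum>i=1..n. (det2 (wip M \<rho> f (g i)) (wip M \<rho> f h) (wip M \<rho> (g i) h) (wip M \<rho> h h))^2)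
    \<le> det2 (wip M \<rho> f f) (wip M \<rho> f h) (wip M \<rho> f h) (wip M \<rho> h h) *
       (Max {det2 (wip M \<rho> (g i) (g i)) (wip M \<rho> (g i) h) (wip M \<rho> (g i) h) (wip M \<rho> h h) | i. i \<in> {1..n}}
        + (real n - 1) *
          (if n \<ge> 2 then
             Max {\<bar>det2 (wip M \<rho> (g j) (g i)) (wip M \<rho> (g j) h) (wip M \<rho> (g i) h) (wip M \<rho> h h)\<bar>
                  | i j. i \<in> {1..n} \<and> j \<in> {1..n} \<and> i \<noteq> j}
           else 0))"
proof -
  interpret L2: pos_semidef_form "weighted_L2 M \<rho>" "wip M \<rho>"
    using rho_meas rho_nonneg by (rule pos_semidef_form_wip)
  have f: "f \<in> weighted_L2 M \<rho>" and h: "h \<in> weighted_L2 M \<rho>"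
    and g: "\<And>i. i \<in> {1..n} \<Longrightarrow> g i \<in> weighted_L2 M \<rho>"
    using f_meas f_L2 h_meas h_L2 g_meas g_L2 by (simp_all add: weighted_L2_def)
  interpret Gram: pos_semidef_form "weighted_L2 M \<rho>" "gram_form (wip M \<rho>) h"
    using h by (rule L2.pos_semidef_form_gram)
  let ?G = "\<lambda>i j. gram_form (wip M \<rho>) h (g i) (g j)"
  have "(\<Sum>i\<in>{1..n}. (gram_form (wip M \<rho>) h f (g i))\<^sup>2) \<le> gram_form (wip M \<rho>) h f f *
    (Max {?G i i | i. i \<in> {1..n}}
     + (real n - 1) * (if n \<ge> 2 then Max {\<bar>?G j i\<bar> | i j. i \<in> {1..n} \<and> j \<in> {1..n} \<and> i \<noteq> j} else 0))"
  proof (rule Gram.Bombieri_inequality)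
    show "{1..n} \<noteq> {}" using n by simp
    show "(\<Sum>j\<in>{1..n}. \<bar>?G i j\<bar>) \<le> Max {?G i i | i. i \<in> {1..n}}
      + (real n - 1) * (if n \<ge> 2 then Max {\<bar>?G j i\<bar> | i j. i \<in> {1..n} \<and> j \<in> {1..n} \<and> i \<noteq> j} else 0)"
      if "i \<in> {1..n}" for i
      using that Gram.nonneg[OF g[OF that]] by (rule row_sum_abs_le_Max_diag_plus_Max_off_diag)
  qed (use f g in auto)
  then show ?thesis unfolding gram_form_def .
qed

end
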